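(* For every integer $\Delta\geq 3$ there exists $\alpha>0$ such that there are infinitely many trees $X$ with maximum degree $\Delta$ with the following property: for every tree $T$ with maximum degree less than $\Delta$, every $T$-partition of $X$ has width at least $|V(X)|^{\alpha}$. Moreover, if $\Delta=3$, then for every $\alpha\in(0,1)$ there are infinitely many trees $X$ with maximum degree $3$ with this property.
   Context: For a graph $G$ and a tree $T$, a $T$-partition of $G$ is a family $(V_x : x\in V(T))$ of pairwise disjoint subsets of $V(G)$ (some possibly empty) with union $V(G)$, indexed by the nodes of $T$, such that for every edge $vw$ of $G$, if $v\in V_x$ and $w\in V_y$ then $x=y$ or $xy\in E(T)$. The width of a $T$-partition is $\max\{|V_x| : x\in V(T)\}$. *)

theory Defs
  imports Complex_Main
begin

definition sgraph :: "'a set \<Rightarrow> 'a set set \<Rightarrow> bool" where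
  "sgraph V E \<longleftrightarrow> finite V \<and>
     (\<forall>e\<in>E. \<exists>u v. u \<noteq> v \<and> u \<in> V \<and> v \<in> V \<and> e = {u, v})"

definition degree :: "'a set \<Rightarrow> 'a set set \<Rightarrow> 'a \<Rightarrow> nat" where
  "degree V E v = card {u \<in> V. {u, v} \<in> E}"

definition max_degree :: "'a set \<Rightarrow> 'a set set \<Rightarrow> nat" where
  "max_degree V E = Max (degree V E ` V)"

definition walk :: "'a set \<Rightarrow> 'a set set \<Rightarrow> 'a list \<Rightarrow> bool" where
  "walk V E xs \<longleftrightarrow> xs \<noteq> [] \<and> set xs \<subseteq> V \<and>
     (\<forall>i. Suc i < length xs \<longrightarrow> {xs ! i, xs ! Suc i} \<in> E)"

definition connected_graph :: "'a set \<Rightarrow> 'a set set \<Rightarrow> bool" where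
  "connected_graph V E \<longleftrightarrow>
     (\<forall>u\<in>V. \<forall>v\<in>V. \<exists>xs. walk V E xs \<and> hd xs = u \<and> last xs = v)"

definition is_cycle :: "'a set \<Rightarrow> 'a set set \<Rightarrow> 'a list \<Rightarrow> bool" where
  "is_cycle V E xs \<longleftrightarrow> length xs \<ge> 3 \<and> distinct xs \<and> walk V E xs \<and>
     {last xs, hd xs} \<in> E"

definition acyclic_graph :: "'a set \<Rightarrow> 'a set set \<Rightarrow> bool" where
  "acyclic_graph V E \<longleftrightarrow> (\<nexists>xs. is_cycle V E xs)"

definition is_tree :: "'a set \<Rightarrow> 'a set set \<Rightarrow> bool" where
  "is_tree V E \<longleftrightarrow> sgraph V E \<and> V \<noteq> {} \<and> connected_graph V E \<and> acyclic_graph V E"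

definition is_T_partition ::
  "'a set \<Rightarrow> 'a set set \<Rightarrow> 'b set \<Rightarrow> 'b set set \<Rightarrow> ('b \<Rightarrow> 'a set) \<Rightarrow> bool" where
  "is_T_partition VX EdX VT ET P \<longleftrightarrow>
     (\<forall>x\<in>VT. \<forall>y\<in>VT. x \<noteq> y \<longrightarrow> P x \<inter> P y = {}) \<and>
     (\<Union>x\<in>VT. P x) = VX \<and>
     (\<forall>v w x y. {v, w} \<in> EdX \<and> x \<in> VT \<and> y \<in> VT \<and> v \<in> P x \<and> w \<in> P y
        \<longrightarrow> x = y \<or> {x, y} \<in> ET)"

definition partition_width :: "'b set \<Rightarrow> ('b \<Rightarrow> 'a set) \<Rightarrow> nat" where
  "partition_width VT P = Max ((\<lambda>x. card (P x)) ` VT)"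

definition wide_for :: "nat \<Rightarrow> real \<Rightarrow> nat set \<Rightarrow> nat set set \<Rightarrow> bool" where
  "wide_for \<Delta> \<alpha> VX EdX \<longleftrightarrow>
     (\<forall>(VT :: nat set) ET P. is_tree VT ET \<and> (\<forall>x\<in>VT. degree VT ET x < \<Delta>) \<and>
        is_T_partition VX EdX VT ET P
        \<longrightarrow> real (partition_width VT P) \<ge> real (card VX) powr \<alpha>)"

end

theory Submission
  imports Defs "HOL-Real_Asymp.Real_Asymp"
begin

text \<open>Let \<open>X\<close> be the tree on \<open>{0..<k^d}\<close> in which \<open>v \<ge> 1\<close> is joined to \<open>(v - 1) div k\<close>;
  it has maximum degree \<open>k + 1\<close>. In a \<open>T\<close>-partition the two ends of an edge of \<open>X\<close> lie in equal
  or adjacent bags, so all vertices of \<open>X\<close>, having depth at most \<open>d\<close>, lie in bags within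
  distance \<open>d\<close> of the bag of the root. If \<open>T\<close> has maximum degree at most \<open>k\<close>, this ball has at most \<open>(d + 1) k (k - 1)^d\<close> nodes, so some bag has at
  least \<open>k^d / ((d + 1) k (k - 1)^d)\<close> vertices. This exceeds \<open>(k^d)^\<alpha>\<close> for large \<open>d\<close> whenever
  \<open>\<alpha> < log\<^sub>k (k / (k - 1))\<close>, and for \<open>k = 2\<close> this bound is \<open>1\<close>.\<close>

lemma walk_Nil [simp]: "\<not> walk V E []"
  by (simp add: walk_def)

lemma walk_singleton [simp]: "walk V E [a] \<longleftrightarrow> a \<in> V"
  by (auto simp: walk_def)

lemma walk_Cons_Cons [simp]:
  "walk V E (a # b # xs) \<longleftrightarrow> a \<in> V \<and> {a, b} \<in> E \<and> walk V E (b # xs)"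
proof -
  have "(\<forall>i. Suc i < length (a # b # xs) \<longrightarrow> {(a # b # xs) ! i, (a # b # xs) ! Suc i} \<in> E) \<longleftrightarrow>
        {a, b} \<in> E \<and> (\<forall>i. Suc i < length (b # xs) \<longrightarrow> {(b # xs) ! i, (b # xs) ! Suc i} \<in> E)"
    by (simp add: All_less_Suc2)
  then show ?thesis by (auto simp: walk_def)
qed

lemma walk_rev:
  assumes "walk V E xs" shows "walk V E (rev xs)"
  unfolding walk_def
proof (intro conjI allI impI)
  fix i assume i: "Suc i < length (rev xs)"
  define j where "j = length xs - Suc (Suc i)"
  have "Suc j < length xs" "Suc j = length xs - Suc i" using i unfolding j_def by auto
  then have "{xs ! j, xs ! Suc j} \<in> E" using assms unfolding walk_def by blast
  then have "{xs ! Suc j, xs ! j} \<in> E" by (simp add: insert_commute)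
  moreover have "rev xs ! i = xs ! Suc j" "rev xs ! Suc i = xs ! j"
    using i \<open>Suc j = length xs - Suc i\<close> by (simp_all add: rev_nth j_def)
  ultimately show "{rev xs ! i, rev xs ! Suc i} \<in> E" by simp
qed (use assms in \<open>auto simp: walk_def\<close>)

lemma walk_join:
  assumes "walk V E xs" "walk V E ys" "last xs = hd ys"
  shows "walk V E (xs @ tl ys) \<and> hd (xs @ tl ys) = hd xs \<and> last (xs @ tl ys) = last ys"
  using assms
proof (induction xs rule: induct_list012)
  case (2 x)
  then show ?case by (cases ys; cases "tl ys") auto
qed auto

lemma connected_graph_if_parent:
  fixes p :: "nat \<Rightarrow> nat"
  assumes "r \<in> V"
    and parent: "\<And>v. v \<in> V \<Longrightarrow> v \<noteq> r \<Longrightarrow> p v < v \<and> p v \<in> V \<and> {v, p v} \<in> E"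
  shows "connected_graph V E"
proof -
  have to_root: "\<exists>xs. walk V E xs \<and> hd xs = v \<and> last xs = r" if "v \<in> V" for v
    using that
  proof (induction v rule: less_induct)
    case (less v)
    show ?case
    proof (cases "v = r")
      case False
      with less parent obtain xs where xs: "walk V E xs" "hd xs = p v" "last xs = r"
        by blast
      then obtain ys where "xs = p v # ys" by (cases xs) auto
      with xs False less.prems parent show ?thesis by (intro exI[of _ "v # xs"]) auto
    qed (use less.prems in \<open>intro exI[of _ "[v]"], auto\<close>)
  qed
  show ?thesis unfolding connected_graph_def
  proof (intro ballI)
    fix u v assume "u \<in> V" "v \<in> V"
    obtain xs ys where "walk V E xs" "hd xs = u" "last xs = r" "walk V E ys" "hd ys = v" "last ys = r"
      using to_root \<open>u \<in> V\<close> \<open>v \<in> V\<close> by meson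
    then show "\<exists>zs. walk V E zs \<and> hd zs = u \<and> last zs = v"
      using walk_join[of V E xs "rev ys"] walk_rev[of V E ys]
      by (metis hd_rev last_rev)
  qed
qed

lemma is_cycle_edge_next:
  assumes "is_cycle V E xs" "i < length xs"
  shows "{xs ! i, xs ! (if Suc i = length xs then 0 else Suc i)} \<in> E"
proof (cases "Suc i = length xs")
  case True
  with assms have "i = length xs - 1" "xs \<noteq> []" by auto
  with True show ?thesis using assms(1)
    by (simp add: is_cycle_def last_conv_nth hd_conv_nth)
next
  case False
  then show ?thesis using assms by (simp add: is_cycle_def walk_def)
qed

text \<open>The largest vertex of a cycle has two distinct lower neighbours on it.\<close>

lemma acyclic_graph_if_unique_lower_neighbour:
  fixes E :: "'a::linorder set set"
  assumes lower: "\<And>a b. {a, b} \<in> E \<Longrightarrow> a < b \<Longrightarrow> a = f b"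
  shows "acyclic_graph V E"
  unfolding acyclic_graph_def
proof
  assume "\<exists>xs. is_cycle V E xs"
  then obtain xs where cyc: "is_cycle V E xs" ..
  let ?L = "length xs"
  have L: "?L \<ge> 3" and dis: "distinct xs" using cyc by (auto simp: is_cycle_def)
  then obtain i where i: "i < ?L" "xs ! i = Max (set xs)"
    by (metis Max_in List.finite_set in_set_conv_nth list.size(3) not_numeral_le_zero set_empty)
  define j1 j2 where "j1 = (if Suc i = ?L then 0 else Suc i)" and "j2 = (if i = 0 then ?L - 1 else i - 1)"
  have j: "j1 < ?L" "j2 < ?L" "j1 \<noteq> i" "j2 \<noteq> i" "j1 \<noteq> j2" "(if Suc j2 = ?L then 0 else Suc j2) = i"
    using L i(1) unfolding j1_def j2_def by auto
  have below: "xs ! j = f (xs ! i)" if "j < ?L" "j \<noteq> i" "{xs ! j, xs ! i} \<in> E" for j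
  proof -
    have "xs ! j \<noteq> xs ! i" using dis that(1,2) i(1) by (simp add: nth_eq_iff_index_eq)
    moreover have "xs ! j \<le> xs ! i" using i(2) that(1) by simp
    ultimately show ?thesis using lower that(3) by simp
  qed
  have "{xs ! j1, xs ! i} \<in> E" "{xs ! j2, xs ! i} \<in> E"
    using is_cycle_edge_next[OF cyc i(1)] is_cycle_edge_next[OF cyc j(2)] j(6)
    by (simp_all add: j1_def insert_commute)
  then have "xs ! j1 = xs ! j2" using below j(1-4) by metis
  with dis j show False by (simp add: nth_eq_iff_index_eq)
qed

definition heap_parent :: "nat \<Rightarrow> nat \<Rightarrow> nat" where
  "heap_parent k v = (v - 1) div k"

text \<open>The first \<open>n\<close> nodes, in breadth-first order, of the complete \<open>k\<close>-ary tree rooted at \<open>0\<close>.\<close>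

definition heap_edges :: "nat \<Rightarrow> nat \<Rightarrow> nat set set" where
  "heap_edges k n = {{v, heap_parent k v} | v. 1 \<le> v \<and> v < n}"

lemma heap_parent_less: "k \<ge> 1 \<Longrightarrow> 1 \<le> v \<Longrightarrow> heap_parent k v < v"
  unfolding heap_parent_def by (metis diff_less div_le_dividend le_less_trans less_one not_le)

lemma heap_parent_less_power: "k \<ge> 1 \<Longrightarrow> v < k ^ Suc j \<Longrightarrow> heap_parent k v < k ^ j"
  unfolding heap_parent_def by (simp add: div_less_iff_less_mult mult.commute)

lemma heap_edges_iff:
  "k \<ge> 1 \<Longrightarrow> {a, b} \<in> heap_edges k n \<longleftrightarrow>
     (1 \<le> a \<and> a < n \<and> b = heap_parent k a) \<or> (1 \<le> b \<and> b < n \<and> a = heap_parent k b)"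
  unfolding heap_edges_def by (auto simp: doubleton_eq_iff)

lemma heap_edges_lower_neighbour:
  assumes "k \<ge> 1" "{a, b} \<in> heap_edges k n" "a < b"
  shows "a = heap_parent k b"
  using assms heap_edges_iff[of k a b n] heap_parent_less[of k a] by auto

lemma is_tree_heap: "k \<ge> 1 \<Longrightarrow> n \<ge> 1 \<Longrightarrow> is_tree {0..<n} (heap_edges k n)"
  unfolding is_tree_def
proof (intro conjI)
  assume k: "k \<ge> 1" and n: "n \<ge> 1"
  show "sgraph {0..<n} (heap_edges k n)"
    unfolding sgraph_def heap_edges_def
  proof (intro conjI ballI)
    fix e assume "e \<in> {{v, heap_parent k v} |v. 1 \<le> v \<and> v < n}"
    then obtain v where v: "e = {v, heap_parent k v}" "1 \<le> v" "v < n" by blast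
    then show "\<exists>u v. u \<noteq> v \<and> u \<in> {0..<n} \<and> v \<in> {0..<n} \<and> e = {u, v}"
      using heap_parent_less[OF k v(2)] by (intro exI[of _ v] exI[of _ "heap_parent k v"]) auto
  qed simp
  show "{0..<n} \<noteq> {}" using n by auto
  show "connected_graph {0..<n} (heap_edges k n)"
  proof (rule connected_graph_if_parent[where r = 0 and p = "heap_parent k"])
    fix v assume v: "v \<in> {0..<n}" "v \<noteq> 0"
    then have "heap_parent k v < v" using heap_parent_less[OF k] by simp
    with v show "heap_parent k v < v \<and> heap_parent k v \<in> {0..<n} \<and> {v, heap_parent k v} \<in> heap_edges k n"
      by (auto simp: heap_edges_def)
  qed (use n in simp)
  show "acyclic_graph {0..<n} (heap_edges k n)"
    using acyclic_graph_if_unique_lower_neighbour heap_edges_lower_neighbour[OF k] by blast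
qed

lemma heap_neighbours_subset:
  assumes "k \<ge> 1"
  shows "{u \<in> {0..<n}. {u, v} \<in> heap_edges k n} \<subseteq> insert (heap_parent k v) {k * v + 1..k * v + k}"
proof
  fix u assume u: "u \<in> {u \<in> {0..<n}. {u, v} \<in> heap_edges k n}"
  show "u \<in> insert (heap_parent k v) {k * v + 1..k * v + k}"
  proof (cases "u = heap_parent k v")
    case False
    then have u1: "1 \<le> u" and "v = (u - 1) div k"
      using u heap_edges_iff[OF assms] by (auto simp: heap_parent_def)
    then have "k * v + (u - 1) mod k = u - 1" by (simp add: mult_div_mod_eq)
    moreover have "(u - 1) mod k < k" using assms by simp
    ultimately have "k * v + 1 \<le> u" "u \<le> k * v + k" using u1 by linarith+
    then show ?thesis by simp
  qed simp
qed

lemma degree_heap_le: "k \<ge> 1 \<Longrightarrow> degree {0..<n} (heap_edges k n) v \<le> k + 1"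
proof -
  assume k: "k \<ge> 1"
  have "degree {0..<n} (heap_edges k n) v \<le> card (insert (heap_parent k v) {k * v + 1..k * v + k})"
    unfolding degree_def by (rule card_mono[OF _ heap_neighbours_subset[OF k]]) simp
  also have "\<dots> \<le> Suc (card {k * v + 1..k * v + k})" by (rule card_insert_le_m1) auto
  finally show ?thesis by simp
qed

lemma degree_heap_one:
  assumes k: "k \<ge> 1" and n: "2 * k < n"
  shows "degree {0..<n} (heap_edges k n) 1 \<ge> k + 1"
proof -
  have "insert 0 {k + 1..2 * k} \<subseteq> {u \<in> {0..<n}. {u, 1} \<in> heap_edges k n}"
  proof
    fix u assume u: "u \<in> insert 0 {k + 1..2 * k}"
    have "heap_parent k u = 1" if "u \<noteq> 0"
      using u that k unfolding heap_parent_def by (intro div_nat_eqI) auto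
    then show "u \<in> {u \<in> {0..<n}. {u, 1} \<in> heap_edges k n}"
      using u n k heap_edges_iff[OF k] by (auto simp: heap_parent_def)
  qed
  then have "card (insert 0 {k + 1..2 * k}) \<le> degree {0..<n} (heap_edges k n) 1"
    unfolding degree_def by (intro card_mono) auto
  then show ?thesis by simp
qed

lemma max_degree_heap:
  assumes k: "k \<ge> 1" and n: "2 * k < n"
  shows "max_degree {0..<n} (heap_edges k n) = k + 1"
  unfolding max_degree_def
proof (rule antisym)
  have "1 \<in> {0..<n}" using k n by auto
  then have "degree {0..<n} (heap_edges k n) 1 \<le> Max (degree {0..<n} (heap_edges k n) ` {0..<n})"
    by (intro Max_ge) auto
  with degree_heap_one[OF k n] show "k + 1 \<le> Max (degree {0..<n} (heap_edges k n) ` {0..<n})"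
    by linarith
  show "Max (degree {0..<n} (heap_edges k n) ` {0..<n}) \<le> k + 1"
    using degree_heap_le[OF k] \<open>1 \<in> {0..<n}\<close> by (intro Max.boundedI) auto
qed

fun graph_ball :: "'b set \<Rightarrow> 'b set set \<Rightarrow> 'b \<Rightarrow> nat \<Rightarrow> 'b set" where
  "graph_ball V E x 0 = {x}"
| "graph_ball V E x (Suc j) = graph_ball V E x j \<union> {y \<in> V. \<exists>z \<in> graph_ball V E x j. {z, y} \<in> E}"

lemma center_in_graph_ball: "x \<in> graph_ball V E x j"
  by (induction j) auto

lemma graph_ball_subset: "x \<in> V \<Longrightarrow> graph_ball V E x j \<subseteq> V"
  by (induction j) auto

lemma finite_graph_ball: "finite V \<Longrightarrow> x \<in> V \<Longrightarrow> finite (graph_ball V E x j)"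
  using graph_ball_subset finite_subset by metis

text \<open>Every node of the sphere of radius \<open>j + 1\<close> has a neighbour in the ball of radius \<open>j\<close>,
  so it contributes at most \<open>k - 1\<close> nodes to the next sphere.\<close>

lemma card_graph_sphere_Suc_le:
  assumes fin: "finite V" and deg: "\<forall>y\<in>V. degree V E y \<le> k" and x: "x \<in> V"
  shows "card (graph_ball V E x (Suc (Suc j)) - graph_ball V E x (Suc j))
           \<le> (k - 1) * card (graph_ball V E x (Suc j) - graph_ball V E x j)"
proof -
  let ?B = "graph_ball V E x"
  let ?S = "?B (Suc j) - ?B j"
  let ?out = "\<lambda>y. {u \<in> V. {u, y} \<in> E} - ?B (Suc j)"
  have "?B (Suc (Suc j)) - ?B (Suc j) \<subseteq> (\<Union>y\<in>?S. ?out y)"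
    by (auto simp: insert_commute)
  then have "card (?B (Suc (Suc j)) - ?B (Suc j)) \<le> card (\<Union>y\<in>?S. ?out y)"
    by (intro card_mono finite_subset[OF _ fin]) auto
  also have "\<dots> \<le> (\<Sum>y\<in>?S. card (?out y))"
    by (intro card_UN_le finite_Diff finite_graph_ball[OF fin x])
  also have "\<dots> \<le> (\<Sum>y\<in>?S. k - 1)"
  proof (rule sum_mono)
    fix y assume y: "y \<in> ?S"
    then obtain z where z: "z \<in> ?B j" "{z, y} \<in> E" and "y \<in> V" by auto
    then have z_nb: "z \<in> {u \<in> V. {u, y} \<in> E}" using graph_ball_subset[OF x] by auto
    have "card (?out y) \<le> card ({u \<in> V. {u, y} \<in> E} - {z})"
      using z fin by (intro card_mono) auto
    also have "\<dots> = degree V E y - 1"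
      unfolding degree_def using z_nb fin by (subst card_Diff_singleton) auto
    also have "\<dots> \<le> k - 1" using deg \<open>y \<in> V\<close> by (simp add: diff_le_mono)
    finally show "card (?out y) \<le> k - 1" .
  qed
  also have "\<dots> = (k - 1) * card ?S" by simp
  finally show ?thesis .
qed

lemma card_graph_sphere_le:
  assumes fin: "finite V" and deg: "\<forall>y\<in>V. degree V E y \<le> k" and x: "x \<in> V"
  shows "card (graph_ball V E x (Suc j) - graph_ball V E x j) \<le> k * (k - 1) ^ j"
proof (induction j)
  case 0
  have "graph_ball V E x (Suc 0) - graph_ball V E x 0 \<subseteq> {u \<in> V. {u, x} \<in> E}"
    by (auto simp: insert_commute)
  then have "card (graph_ball V E x (Suc 0) - graph_ball V E x 0) \<le> degree V E x"
    unfolding degree_def using fin by (intro card_mono) auto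
  moreover have "degree V E x \<le> k" using deg x by blast
  ultimately show ?case by simp
next
  case (Suc j)
  have "card (graph_ball V E x (Suc (Suc j)) - graph_ball V E x (Suc j))
      \<le> (k - 1) * card (graph_ball V E x (Suc j) - graph_ball V E x j)"
    by (rule card_graph_sphere_Suc_le[OF assms])
  also have "\<dots> \<le> (k - 1) * (k * (k - 1) ^ j)" using Suc by (rule mult_le_mono2)
  finally show ?case by (simp add: ac_simps)
qed

lemma card_graph_ball_le:
  assumes fin: "finite V" and deg: "\<forall>y\<in>V. degree V E y \<le> k" and x: "x \<in> V" and k: "k \<ge> 2"
  shows "card (graph_ball V E x j) \<le> (j + 1) * k * (k - 1) ^ j"
proof (induction j)
  case 0
  then show ?case using k by simp
next
  case (Suc j)
  let ?B = "graph_ball V E x"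
  have "?B j \<subseteq> ?B (Suc j)" by auto
  then have "card (?B (Suc j)) = card (?B j) + card (?B (Suc j) - ?B j)"
    using finite_graph_ball[OF fin x] by (metis card_Diff_subset card_mono le_add_diff_inverse)
  also have "\<dots> \<le> (j + 1) * k * (k - 1) ^ j + k * (k - 1) ^ j"
    using Suc card_graph_sphere_le[OF fin deg x] by (intro add_mono)
  also have "\<dots> = (j + 2) * k * (k - 1) ^ j" by (simp add: algebra_simps)
  also have "\<dots> \<le> (j + 2) * k * (k - 1) ^ Suc j"
    using k by (intro mult_le_mono2 power_increasing) auto
  finally show ?case by simp
qed

lemma is_T_partitionD:
  assumes "is_T_partition V E VT ET P"
  shows "(\<Union>x\<in>VT. P x) = V"
    and "{v, w} \<in> E \<Longrightarrow> x \<in> VT \<Longrightarrow> y \<in> VT \<Longrightarrow> v \<in> P x \<Longrightarrow> w \<in> P y \<Longrightarrow> x = y \<or> {x, y} \<in> ET"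
  using assms unfolding is_T_partition_def by blast+

lemma T_partition_ball_step:
  assumes P: "is_T_partition V E VT ET P" and x: "x \<in> VT"
    and vw: "{v, w} \<in> E" "w \<in> V" and v: "v \<in> (\<Union>y\<in>graph_ball VT ET x j. P y)"
  shows "w \<in> (\<Union>y\<in>graph_ball VT ET x (Suc j). P y)"
proof -
  obtain y where y: "y \<in> graph_ball VT ET x j" "v \<in> P y" using v by blast
  obtain z where z: "z \<in> VT" "w \<in> P z" using is_T_partitionD(1)[OF P] vw(2) by blast
  have "y \<in> VT" using y(1) graph_ball_subset[OF x] by blast
  then have "y = z \<or> {y, z} \<in> ET" using is_T_partitionD(2)[OF P vw(1) _ z(1) y(2) z(2)] by blast
  then show ?thesis using y z by auto
qed

lemma card_le_card_mult_partition_width: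
  assumes P: "is_T_partition V E VT ET P" and fin: "finite V" "finite VT"
    and S: "S \<subseteq> VT" "V \<subseteq> (\<Union>x\<in>S. P x)"
  shows "card V \<le> card S * partition_width VT P"
proof -
  have "card V \<le> card (\<Union>x\<in>S. P x)"
  proof (rule card_mono)
    show "finite (\<Union>x\<in>S. P x)"
      using is_T_partitionD(1)[OF P] S(1) fin(1) by (rule_tac finite_subset[of _ V]) auto
  qed (rule S(2))
  also have "\<dots> \<le> (\<Sum>x\<in>S. card (P x))"
    using S(1) fin(2) by (intro card_UN_le) (rule finite_subset)
  also have "\<dots> \<le> (\<Sum>x\<in>S. partition_width VT P)"
    using S(1) fin(2) unfolding partition_width_def by (intro sum_mono Max_ge) auto
  finally show ?thesis by simp
qed

text \<open>The vertices below \<open>k ^ j\<close> lie at depth at most \<open>j\<close> in the heap tree, so their bags lie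
  within distance \<open>j\<close> of the bag of the root.\<close>

lemma heap_prefix_subset_ball:
  assumes k: "k \<ge> 1" and P: "is_T_partition {0..<n} (heap_edges k n) VT ET P"
    and x: "x \<in> VT" "0 \<in> P x" and j: "k ^ j \<le> n"
  shows "{0..<k ^ j} \<subseteq> (\<Union>y\<in>graph_ball VT ET x j. P y)"
  using j
proof (induction j)
  case 0
  then show ?case using x by auto
next
  case (Suc j)
  have "k ^ j \<le> k ^ Suc j" using k by simp
  with Suc.prems have kj: "k ^ j \<le> n" by linarith
  show ?case
  proof
    fix v assume v: "v \<in> {0..<k ^ Suc j}"
    show "v \<in> (\<Union>y\<in>graph_ball VT ET x (Suc j). P y)"
    proof (cases "v = 0")
      case True
      then show ?thesis using x(2) by (intro UN_I[OF center_in_graph_ball]) simp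
    next
      case False
      have "heap_parent k v \<in> {0..<k ^ j}" using heap_parent_less_power[OF k] v by simp
      with Suc.IH[OF kj] have parent: "heap_parent k v \<in> (\<Union>y\<in>graph_ball VT ET x j. P y)"
        by (rule subsetD)
      have vn: "v \<in> {0..<n}" using v Suc.prems by simp
      then have "{v, heap_parent k v} \<in> heap_edges k n"
        using False unfolding heap_edges_def by auto
      then have "{heap_parent k v, v} \<in> heap_edges k n" by (simp add: insert_commute)
      from T_partition_ball_step[OF P x(1) this vn parent] show ?thesis .
    qed
  qed
qed

lemma heap_partition_width_bound:
  assumes k: "k \<ge> 2" and fin: "finite VT" and deg: "\<forall>x\<in>VT. degree VT ET x \<le> k"
    and P: "is_T_partition {0..<k ^ d} (heap_edges k (k ^ d)) VT ET P"
  shows "k ^ d \<le> (d + 1) * k * (k - 1) ^ d * partition_width VT P"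
proof -
  note is_T_partitionD(1)[OF P]
  moreover have "0 \<in> {0..<k ^ d}" using k by simp
  ultimately obtain x where x: "x \<in> VT" "0 \<in> P x" by blast
  have cover: "{0..<k ^ d} \<subseteq> (\<Union>y\<in>graph_ball VT ET x d. P y)"
    using heap_prefix_subset_ball[OF _ P x] k by simp
  have "k ^ d = card {0..<k ^ d}" by simp
  also have "\<dots> \<le> card (graph_ball VT ET x d) * partition_width VT P"
    by (rule card_le_card_mult_partition_width[OF P _ fin graph_ball_subset[OF x(1)] cover]) simp
  also have "\<dots> \<le> (d + 1) * k * (k - 1) ^ d * partition_width VT P"
    using card_graph_ball_le[OF fin deg x(1) k] by (rule mult_le_mono1)
  finally show ?thesis .
qed

lemma power_powr_mult_le:
  fixes K \<alpha> :: real and d :: nat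
  assumes K: "K > 1" and grow: "(real d + 1) * K \<le> exp (real d * (ln (K / (K - 1)) - \<alpha> * ln K))"
  shows "(K ^ d) powr \<alpha> * ((real d + 1) * K * (K - 1) ^ d) \<le> K ^ d"
proof -
  have "(K ^ d) powr \<alpha> * ((real d + 1) * K * (K - 1) ^ d)
      = exp (real d * (\<alpha> * ln K)) * ((real d + 1) * K) * exp (real d * ln (K - 1))"
    using K by (simp add: powr_def ln_realpow exp_of_nat_mult ac_simps)
  also have "\<dots> \<le> exp (real d * (\<alpha> * ln K)) * exp (real d * (ln (K / (K - 1)) - \<alpha> * ln K))
      * exp (real d * ln (K - 1))"
    using grow by (intro mult_right_mono mult_left_mono) auto
  also have "\<dots> = exp (real d * ln K)"
    using K by (simp add: ln_div algebra_simps flip: exp_add)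
  also have "\<dots> = K ^ d" using K by (simp add: exp_of_nat_mult)
  finally show ?thesis .
qed

lemma wide_for_heap:
  fixes k d :: nat and \<alpha> :: real
  assumes k: "k \<ge> 2"
    and grow: "(real d + 1) * k \<le> exp (real d * (ln (real k / (real k - 1)) - \<alpha> * ln k))"
  shows "wide_for (k + 1) \<alpha> {0..<k ^ d} (heap_edges k (k ^ d))"
  unfolding wide_for_def
proof (intro allI impI, elim conjE)
  fix VT :: "nat set" and ET P
  assume tree: "is_tree VT ET" and deg: "\<forall>x\<in>VT. degree VT ET x < k + 1"
    and P: "is_T_partition {0..<k ^ d} (heap_edges k (k ^ d)) VT ET P"
  let ?n = "k ^ d" and ?B = "(d + 1) * k * (k - 1) ^ d" and ?w = "partition_width VT P"
  have "finite VT" using tree by (simp add: is_tree_def sgraph_def)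
  with deg have "?n \<le> ?B * ?w"
    using heap_partition_width_bound[OF k _ _ P] by (simp add: less_Suc_eq_le)
  then have "real ?n \<le> real ?B * real ?w" by (simp flip: of_nat_mult)
  moreover have "real ?B = (real d + 1) * real k * (real k - 1) ^ d"
    using k by (simp add: of_nat_diff algebra_simps)
  then have "real ?n powr \<alpha> * real ?B \<le> real ?n"
    using power_powr_mult_le[of k d \<alpha>] grow k by simp
  moreover have "?B > 0" using k by simp
  then have "real ?B > 0" by (simp only: of_nat_0_less_iff)
  ultimately have "real ?n powr \<alpha> * real ?B \<le> real ?w * real ?B" by (simp add: ac_simps)
  then have "real ?n powr \<alpha> \<le> real ?w" using \<open>real ?B > 0\<close> by (rule mult_right_le_imp_le)
  then show "real (card {0..<?n}) powr \<alpha> \<le> real ?w" by simp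
qed

lemma heap_trees_wide:
  fixes k :: nat and \<alpha> :: real
  assumes k: "k \<ge> 2" and \<alpha>: "\<alpha> < log (real k) (real k / (real k - 1))"
  shows "\<exists>(VX :: nat set) EdX. is_tree VX EdX \<and> max_degree VX EdX = k + 1 \<and>
           card VX \<ge> N \<and> wide_for (k + 1) \<alpha> VX EdX"
proof -
  define t where "t = ln (real k / (real k - 1)) - \<alpha> * ln k"
  have "\<alpha> * ln k < ln (real k / (real k - 1))"
    using \<alpha> k by (simp add: log_def pos_less_divide_eq)
  then have "t > 0" unfolding t_def by simp
  then have "eventually (\<lambda>d. (real d + 1) * k \<le> exp (real d * t)) sequentially"
    by real_asymp
  then obtain d0 where d0: "\<And>d. d \<ge> d0 \<Longrightarrow> (real d + 1) * k \<le> exp (real d * t)"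
    by (auto simp: eventually_sequentially)
  define d where "d = max d0 (max N 3)"
  have wide: "wide_for (k + 1) \<alpha> {0..<k ^ d} (heap_edges k (k ^ d))"
    using wide_for_heap[OF k] d0 by (simp add: d_def t_def)
  have "2 * k < 2 * 2 * k" using k by simp
  also have "\<dots> \<le> k * k * k" using k by (intro mult_le_mono) auto
  also have "\<dots> = k ^ 3" by (simp add: power3_eq_cube)
  also have "\<dots> \<le> k ^ d" using k by (intro power_increasing) (auto simp: d_def)
  finally have max_degree: "max_degree {0..<k ^ d} (heap_edges k (k ^ d)) = k + 1"
    using max_degree_heap k by simp
  have "N \<le> d" by (simp add: d_def)
  also have "\<dots> < 2 ^ d" by (rule less_exp)
  also have "\<dots> \<le> k ^ d" using k by (intro power_mono) auto
  finally have "N \<le> card {0..<k ^ d}" by simp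
  with wide max_degree is_tree_heap[of k "k ^ d"] k show ?thesis by fastforce
qed

theorem proposition4:
  shows "(\<forall>\<Delta>::nat. \<Delta> \<ge> 3 \<longrightarrow>
            (\<exists>\<alpha>::real. \<alpha> > 0 \<and>
               (\<forall>N::nat. \<exists>(VX :: nat set) EdX. is_tree VX EdX \<and> max_degree VX EdX = \<Delta> \<and>
                   card VX \<ge> N \<and> wide_for \<Delta> \<alpha> VX EdX))) \<and>
         (\<forall>\<alpha>::real. 0 < \<alpha> \<and> \<alpha> < 1 \<longrightarrow>
               (\<forall>N::nat. \<exists>(VX :: nat set) EdX. is_tree VX EdX \<and> max_degree VX EdX = 3 \<and>
                   card VX \<ge> N \<and> wide_for 3 \<alpha> VX EdX))"
proof (intro conjI allI impI)
  fix \<Delta> :: nat assume "\<Delta> \<ge> 3"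
  define k where "k = \<Delta> - 1"
  have k: "k \<ge> 2" and \<Delta>: "\<Delta> = k + 1" using \<open>\<Delta> \<ge> 3\<close> by (simp_all add: k_def)
  define \<alpha> where "\<alpha> = log (real k) (real k / (real k - 1)) / 2"
  have "log (real k) (real k / (real k - 1)) > 0" using k by simp
  then have "\<alpha> > 0" "\<alpha> < log (real k) (real k / (real k - 1))" by (simp_all add: \<alpha>_def)
  then show "\<exists>\<alpha>>0. \<forall>N. \<exists>VX EdX. is_tree VX EdX \<and> max_degree VX EdX = \<Delta> \<and> N \<le> card VX \<and> wide_for \<Delta> \<alpha> VX EdX"
    using heap_trees_wide[OF k] \<Delta> by blast
next
  fix \<alpha> :: real and N :: nat assume "0 < \<alpha> \<and> \<alpha> < 1"
  then have "\<alpha> < log (real 2) (real 2 / (real 2 - 1))" by simp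
  from heap_trees_wide[OF _ this, of N]
  show "\<exists>VX EdX. is_tree VX EdX \<and> max_degree VX EdX = 3 \<and> N \<le> card VX \<and> wide_for 3 \<alpha> VX EdX"
    by simp
qed

end
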